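(* Let $\mathbb{E}^\ast_n=\{(a,b)\in\mathbb{N}^2:1\le a+b\le n\}$ and define $\vec v:\mathbb{E}^\ast_n\to W$ by \[\vec v(a,b)=(\underbrace{1,\dots,1}_{a},\underbrace{0,\dots,0}_{n-a-b},\underbrace{-1,\dots,-1}_{b}).\] (a) The map $(a,b)\mapsto \mathbb{R}_{\ge0}\vec v(a,b)$ is a bijection from $\mathbb{E}^\ast_n$ onto the set of extreme rays of $I(\mathfrak{gl}_n,V\oplus\bigwedge^2)$. (b) For $S\subseteq[n]$, the extreme rays lying in the chamber $C(S)$ are exactly those generated by $\vec v(\pi_\ell^S,\ell-\pi_\ell^S)$ for $\ell=1,\dots,n$, where $\pi_\ell^S=|S\cap[n-\ell+1,\infty)|$.
   Context: Identify the diagonal Cartan subalgebra of $\mathfrak{gl}_n$ with $\mathbb{R}^n$ with coordinates $x_1,\dots,x_n$. Let $W=\{x_1\ge\cdots\ge x_n\}$ and $W^0=\{x_1>\cdots>x_n\}$. For $1\le i\le j\le n$ let $\lambda_{i,j}^\perp$ be the hyperplane $x_i+x_j=0$ (for $i=j$: $x_i=0$); $I(\mathfrak{gl}_n,V\oplus\bigwedge^2)$ is the arrangement of these hyperplanes restricted to $W$. Chambers are the closures of the connected components of $W^0\setminus\bigcup\lambda_{i,j}^\perp$; a face is a chamber or the intersection of a chamber with a supporting hyperplane; an extreme ray is a face that is a half-line. For $S=\{a_1>\cdots>a_k\}\subseteq[n]$, $C(S)$ is the subset of $W$ on which, for $1\le i\le j\le n$, $x_i+x_j\ge0$ if $i\le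 k$ and $j\le i+a_i-1$, and $x_i+x_j\le0$ otherwise (row $i$ of the right-justified sign tableau of the $x_i+x_j$ has $a_i$ plus signs for $i\le k$, none for $i>k$); these are exactly the chambers. *)

theory Defs
  imports "HOL-Analysis.Analysis"
begin

text \<open>Points of R^n are functions nat => real vanishing outside the index set {1..n};
  nat => real carries the product topology (HOL-Analysis Function_Topology), whose
  restriction to this subspace is the Euclidean topology of R^n.\<close>

definition Rn :: "nat \<Rightarrow> (nat \<Rightarrow> real) set" where
  "Rn n = {x. \<forall>i. (i < 1 \<or> n < i) \<longrightarrow> x i = 0}"

definition Weyl :: "nat \<Rightarrow> (nat \<Rightarrow> real) set" where
  "Weyl n = {x \<in> Rn n. \<forall>i j. 1 \<le> i \<longrightarrow> i \<le> j \<longrightarrow> j \<le> n \<longrightarrow> x j \<le> x i}"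

definition Weyl0 :: "nat \<Rightarrow> (nat \<Rightarrow> real) set" where
  "Weyl0 n = {x \<in> Rn n. \<forall>i j. 1 \<le> i \<longrightarrow> i < j \<longrightarrow> j \<le> n \<longrightarrow> x j < x i}"

definition hyp :: "nat \<Rightarrow> nat \<Rightarrow> nat \<Rightarrow> (nat \<Rightarrow> real) set" where
  "hyp n i j = {x \<in> Rn n. x i + x j = 0}"

definition complement_set :: "nat \<Rightarrow> (nat \<Rightarrow> real) set" where
  "complement_set n = Weyl0 n - (\<Union>{hyp n i j | i j. 1 \<le> i \<and> i \<le> j \<and> j \<le> n})"

definition chambers :: "nat \<Rightarrow> (nat \<Rightarrow> real) set set" where
  "chambers n = {closure (connected_component_set (complement_set n) x) | x. x \<in> complement_set n}"

definition is_face :: "nat \<Rightarrow> (nat \<Rightarrow> real) set \<Rightarrow> bool" where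
  "is_face n F \<longleftrightarrow> (\<exists>C \<in> chambers n. F = C \<or>
     (\<exists>(c :: nat \<Rightarrow> real) (d :: real). (\<exists>i\<in>{1..n}. c i \<noteq> 0) \<and>
        (\<forall>x\<in>C. (\<Sum>i=1..n. c i * x i) \<le> d) \<and>
        (\<exists>x\<in>C. (\<Sum>i=1..n. c i * x i) = d) \<and>
        F = {x \<in> C. (\<Sum>i=1..n. c i * x i) = d}))"

definition is_half_line :: "nat \<Rightarrow> (nat \<Rightarrow> real) set \<Rightarrow> bool" where
  "is_half_line n F \<longleftrightarrow> (\<exists>p \<in> Rn n. \<exists>v \<in> Rn n. v \<noteq> (\<lambda>_. 0) \<and>
      F = {(\<lambda>i. p i + t * v i) | t. t \<ge> 0})"

definition extreme_rays :: "nat \<Rightarrow> (nat \<Rightarrow> real) set set" where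
  "extreme_rays n = {F. is_face n F \<and> is_half_line n F}"

definition ray :: "(nat \<Rightarrow> real) \<Rightarrow> (nat \<Rightarrow> real) set" where
  "ray v = {(\<lambda>i. t * v i) | t. t \<ge> 0}"

definition Estar :: "nat \<Rightarrow> (nat \<times> nat) set" where
  "Estar n = {(a, b). 1 \<le> a + b \<and> a + b \<le> n}"

definition vv :: "nat \<Rightarrow> nat \<Rightarrow> nat \<Rightarrow> (nat \<Rightarrow> real)" where
  "vv n a b = (\<lambda>i. if 1 \<le> i \<and> i \<le> a then 1
                   else if n - b < i \<and> i \<le> n then -1 else 0)"

text \<open>For S = {a_1 > ... > a_k}, a_i is the i-th largest element of S.\<close>
definition Sel :: "nat set \<Rightarrow> nat \<Rightarrow> nat" where
  "Sel S i = rev (sorted_list_of_set S) ! (i - 1)"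

definition CS :: "nat \<Rightarrow> nat set \<Rightarrow> (nat \<Rightarrow> real) set" where
  "CS n S = {x \<in> Weyl n. \<forall>i j. 1 \<le> i \<longrightarrow> i \<le> j \<longrightarrow> j \<le> n \<longrightarrow>
      (if i \<le> card S \<and> j + 1 \<le> i + Sel S i then 0 \<le> x i + x j else x i + x j \<le> 0)}"

definition piS :: "nat \<Rightarrow> nat set \<Rightarrow> nat \<Rightarrow> nat" where
  "piS n S l = card (S \<inter> {n - l + 1..})"

end

theory Submission
  imports Defs
begin

text \<open>
  The complement of the arrangement in the open Weyl chamber splits according to the signs of the
  pair sums x_i + x_j; each sign class is star-shaped around any of its points, hence it is a
  connected component, and its closure is the polyhedral cone cut out by the corresponding weak
  sign conditions. Such a cone is pointed and is mapped into itself by every odd monotone map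
  applied coordinatewise. If w spans an extreme ray, splitting off the soft-thresholded vector
  w - \<tau> sgn w (with \<tau> the least nonzero |w_i|) shows that sgn w, which is some v(a,b), spans the
  same ray. Conversely v(a,b) lies in the chamber of an explicit point, where it is cut out by a
  linear functional that is a sum of four terms nonnegative on that chamber. For (b), comparing the
  sign tableau of v(a,b) with that of C(S) shows that v(a,b) lies in C(S) exactly when
  a = \<pi>^S_(a+b).
\<close>

section \<open>Chambers as sign cones\<close>

lemma complement_set_iff:
  "y \<in> complement_set n \<longleftrightarrow> y \<in> Weyl0 n \<and>
     (\<forall>i j. 1 \<le> i \<longrightarrow> i \<le> j \<longrightarrow> j \<le> n \<longrightarrow> y i + y j \<noteq> 0)"
  unfolding complement_set_def hyp_def Weyl0_def by blast

definition open_chamber :: "nat \<Rightarrow> (nat \<Rightarrow> real) \<Rightarrow> (nat \<Rightarrow> real) set" where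
  "open_chamber n x = {y \<in> complement_set n. \<forall>i j. 1 \<le> i \<longrightarrow> i \<le> j \<longrightarrow> j \<le> n \<longrightarrow>
      (0 < x i + x j \<longleftrightarrow> 0 < y i + y j)}"

definition closed_chamber :: "nat \<Rightarrow> (nat \<Rightarrow> real) \<Rightarrow> (nat \<Rightarrow> real) set" where
  "closed_chamber n x = {y \<in> Weyl n. \<forall>i j. 1 \<le> i \<longrightarrow> i \<le> j \<longrightarrow> j \<le> n \<longrightarrow>
      (0 < x i + x j \<longrightarrow> 0 \<le> y i + y j) \<and> (x i + x j < 0 \<longrightarrow> y i + y j \<le> 0)}"

definition affine_comb :: "(nat \<Rightarrow> real) \<Rightarrow> (nat \<Rightarrow> real) \<Rightarrow> real \<Rightarrow> (nat \<Rightarrow> real)" where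
  "affine_comb y z t = (\<lambda>i. (1 - t) * y i + t * z i)"

lemma continuous_on_affine_comb: "continuous_on S (affine_comb y z)"
  unfolding affine_comb_def by (intro continuous_intros)

lemma continuous_on_pair_sum: "continuous_on S (\<lambda>z::nat \<Rightarrow> real. z i + z j)"
  by (intro continuous_intros continuous_on_product_then_coordinatewise continuous_on_id)

lemma connected_nonvanishing_same_sign:
  fixes g :: "'a::topological_space \<Rightarrow> real"
  assumes "connected C" "continuous_on C g" "\<And>z. z \<in> C \<Longrightarrow> g z \<noteq> 0" "p \<in> C" "q \<in> C"
  shows "0 < g p \<longleftrightarrow> 0 < g q"
proof -
  have conn: "connected (g ` C)"
    using assms(2,1) by (rule connected_continuous_image)
  have "0 \<notin> g ` C" using assms(3) by force
  then have "\<not> (g u < 0 \<and> 0 < g v)" if "u \<in> C" "v \<in> C" for u v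
    using conn[unfolded connected_iff_interval, rule_format, of "g u" "g v" 0] that by auto
  moreover have "g p \<noteq> 0" "g q \<noteq> 0" using assms(3-5) by auto
  ultimately show ?thesis using assms(4,5) by fastforce
qed

lemma connected_component_subset_open_chamber:
  assumes x: "x \<in> complement_set n"
  shows "connected_component_set (complement_set n) x \<subseteq> open_chamber n x"
proof
  let ?C = "connected_component_set (complement_set n) x"
  fix y assume y: "y \<in> ?C"
  have C: "?C \<subseteq> complement_set n" by (rule connected_component_subset)
  have "0 < x i + x j \<longleftrightarrow> 0 < y i + y j" if "1 \<le> i" "i \<le> j" "j \<le> n" for i j
  proof (rule connected_nonvanishing_same_sign[OF _ continuous_on_pair_sum])
    show "z i + z j \<noteq> 0" if "z \<in> ?C" for z
      using that C \<open>1 \<le> i\<close> \<open>i \<le> j\<close> \<open>j \<le> n\<close> complement_set_iff by blast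
  qed (use x y in \<open>auto simp: connected_component_refl\<close>)
  then show "y \<in> open_chamber n x"
    unfolding open_chamber_def using y C by blast
qed

lemma open_chamber_subset_closed_chamber: "open_chamber n x \<subseteq> closed_chamber n x"
proof
  fix y assume y: "y \<in> open_chamber n x"
  then have "y \<in> Weyl n"
    unfolding open_chamber_def complement_set_iff Weyl0_def Weyl_def by (auto simp: le_less)
  then show "y \<in> closed_chamber n x"
    using y unfolding open_chamber_def closed_chamber_def by force
qed

lemma sign_affine_comb:
  fixes p q t :: real
  assumes t: "0 < t" "t \<le> 1" and q: "q \<noteq> 0" "0 < q \<longrightarrow> 0 \<le> p" "q < 0 \<longrightarrow> p \<le> 0"
  shows "(0 < (1 - t) * p + t * q \<longleftrightarrow> 0 < q) \<and> (1 - t) * p + t * q \<noteq> 0"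
proof (cases "0 < q")
  case True
  then have "0 \<le> (1 - t) * p" "0 < t * q" using t q by auto
  then show ?thesis using True by linarith
next
  case False
  then have "(1 - t) * p \<le> 0" "t * q < 0"
    using t q by (auto simp: mult_nonneg_nonpos mult_pos_neg)
  then show ?thesis using False by linarith
qed

lemma affine_comb_in_open_chamber:
  assumes x: "x \<in> complement_set n"
    and y: "y \<in> closed_chamber n x" and z: "z \<in> open_chamber n x" and t: "0 < t" "t \<le> 1"
  shows "affine_comb y z t \<in> open_chamber n x"
proof -
  let ?w = "affine_comb y z t"
  have yW: "y \<in> Weyl n" and zW: "z \<in> Weyl0 n"
    using y z unfolding closed_chamber_def open_chamber_def complement_set_iff by auto
  have "?w j < ?w i" if "1 \<le> i" "i < j" "j \<le> n" for i j
  proof -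
    have "z j < z i" "y j \<le> y i" using that zW yW unfolding Weyl0_def Weyl_def by auto
    then show ?thesis
      unfolding affine_comb_def using t by (intro add_le_less_mono mult_left_mono mult_strict_left_mono) auto
  qed
  moreover have "?w \<in> Rn n"
    using yW zW unfolding Weyl0_def Weyl_def Rn_def affine_comb_def by auto
  ultimately have wW: "?w \<in> Weyl0 n" unfolding Weyl0_def by auto
  have "(0 < ?w i + ?w j \<longleftrightarrow> 0 < z i + z j) \<and> ?w i + ?w j \<noteq> 0"
    if ij: "1 \<le> i" "i \<le> j" "j \<le> n" for i j
  proof -
    have "?w i + ?w j = (1 - t) * (y i + y j) + t * (z i + z j)"
      unfolding affine_comb_def by (simp add: algebra_simps)
    moreover have "z i + z j \<noteq> 0" "x i + x j \<noteq> 0"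
      using x z ij unfolding open_chamber_def complement_set_iff by auto
    ultimately show ?thesis
      using sign_affine_comb[OF t] y z ij
      unfolding closed_chamber_def open_chamber_def by (smt (verit) mem_Collect_eq)
  qed
  then show ?thesis
    using wW z unfolding open_chamber_def complement_set_iff by auto
qed

lemma connected_open_chamber:
  assumes x: "x \<in> complement_set n"
  shows "connected (open_chamber n x)"
proof -
  let ?O = "open_chamber n x"
  have xO: "x \<in> ?O" using x unfolding open_chamber_def by auto
  have seg: "affine_comb x y ` {0..1} \<subseteq> ?O" if "y \<in> ?O" for y
  proof
    fix w assume "w \<in> affine_comb x y ` {0..1}"
    then obtain t where t: "0 \<le> t" "t \<le> 1" "w = affine_comb x y t" by auto
    show "w \<in> ?O"
    proof (cases "t = 0")
      case True then show ?thesis using t xO by (simp add: affine_comb_def)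
    next
      case False
      have "x \<in> closed_chamber n x" using xO open_chamber_subset_closed_chamber by blast
      then show ?thesis using affine_comb_in_open_chamber[OF x _ that] t False by auto
    qed
  qed
  have "?O = (\<Union>y\<in>?O. affine_comb x y ` {0..1})"
  proof
    show "?O \<subseteq> (\<Union>y\<in>?O. affine_comb x y ` {0..1})"
    proof
      fix y assume "y \<in> ?O"
      moreover have "y = affine_comb x y 1" by (simp add: affine_comb_def)
      ultimately show "y \<in> (\<Union>y\<in>?O. affine_comb x y ` {0..1})" by force
    qed
  qed (use seg in blast)
  moreover have "connected (\<Union>y\<in>?O. affine_comb x y ` {0..1})"
  proof (rule connected_Union)
    show "connected S" if "S \<in> (\<lambda>y. affine_comb x y ` {0..1}) ` ?O" for S
      using that connected_continuous_image[OF continuous_on_affine_comb connected_Icc] by auto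
    have "x = affine_comb x y 0" for y by (simp add: affine_comb_def)
    then have "x \<in> \<Inter> ((\<lambda>y. affine_comb x y ` {0..1}) ` ?O)" by force
    then show "\<Inter> ((\<lambda>y. affine_comb x y ` {0..1}) ` ?O) \<noteq> {}" by blast
  qed
  ultimately show ?thesis by simp
qed

lemma connected_component_eq_open_chamber:
  assumes x: "x \<in> complement_set n"
  shows "connected_component_set (complement_set n) x = open_chamber n x"
proof
  show "open_chamber n x \<subseteq> connected_component_set (complement_set n) x"
    by (rule connected_component_maximal)
      (use x connected_open_chamber[OF x] in \<open>auto simp: open_chamber_def\<close>)
qed (rule connected_component_subset_open_chamber[OF x])

lemma closed_closed_chamber: "closed (closed_chamber n x)"
proof -
  have "closed_chamber n x = (\<Inter>i\<in>{i. i < 1 \<or> n < i}. {y. y i = 0}) \<inter>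
     (\<Inter>(i, j)\<in>{(i, j). 1 \<le> i \<and> i \<le> j \<and> j \<le> n}. {y. y j \<le> y i}) \<inter>
     (\<Inter>(i, j)\<in>{(i, j). 1 \<le> i \<and> i \<le> j \<and> j \<le> n \<and> 0 < x i + x j}. {y. 0 \<le> y i + y j}) \<inter>
     (\<Inter>(i, j)\<in>{(i, j). 1 \<le> i \<and> i \<le> j \<and> j \<le> n \<and> x i + x j < 0}. {y. y i + y j \<le> 0})"
    unfolding closed_chamber_def Weyl_def Rn_def by auto
  moreover have coord: "continuous_on UNIV (\<lambda>y::nat \<Rightarrow> real. y i)" for i by simp
  ultimately show ?thesis
    by (simp only:) (intro closed_Int closed_INT ballI; clarsimp;
        intro closed_Collect_le closed_Collect_eq continuous_on_const continuous_on_pair_sum coord)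
qed

lemma closure_open_chamber:
  assumes x: "x \<in> complement_set n"
  shows "closure (open_chamber n x) = closed_chamber n x"
proof
  show "closure (open_chamber n x) \<subseteq> closed_chamber n x"
    by (rule closure_minimal[OF open_chamber_subset_closed_chamber closed_closed_chamber])
  show "closed_chamber n x \<subseteq> closure (open_chamber n x)"
  proof
    fix y assume y: "y \<in> closed_chamber n x"
    have xO: "x \<in> open_chamber n x" using x unfolding open_chamber_def by auto
    have "affine_comb y x ` {0<..1} \<subseteq> open_chamber n x"
      using affine_comb_in_open_chamber[OF x y xO] by auto
    then have "affine_comb y x ` closure {0<..1} \<subseteq> closure (open_chamber n x)"
      by (intro image_closure_subset continuous_on_affine_comb closed_closure)
        (use closure_subset in blast)
    moreover have "y = affine_comb y x 0" by (simp add: affine_comb_def)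
    ultimately show "y \<in> closure (open_chamber n x)" by force
  qed
qed

lemma chambers_eq: "chambers n = {closed_chamber n x | x. x \<in> complement_set n}"
proof -
  have "closure (connected_component_set (complement_set n) x) = closed_chamber n x"
    if "x \<in> complement_set n" for x
    using that by (simp add: connected_component_eq_open_chamber closure_open_chamber)
  then show ?thesis unfolding chambers_def by blast
qed


section \<open>Extreme rays\<close>

lemma closed_chamber_Rn: "y \<in> closed_chamber n x \<Longrightarrow> y \<in> Rn n"
  unfolding closed_chamber_def Weyl_def by auto

lemma closed_chamber_scale:
  assumes "y \<in> closed_chamber n x" "0 \<le> t"
  shows "(\<lambda>i. t * y i) \<in> closed_chamber n x"
  using assms unfolding closed_chamber_def Weyl_def Rn_def
  by (auto simp: distrib_left[symmetric] mult_left_mono mult_nonneg_nonpos)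

lemma closed_chamber_odd_mono_image:
  fixes \<phi> :: "real \<Rightarrow> real"
  assumes y: "y \<in> closed_chamber n x" and mono: "mono \<phi>" and odd: "\<And>s. \<phi> (- s) = - \<phi> s"
  shows "(\<lambda>i. \<phi> (y i)) \<in> closed_chamber n x"
proof -
  have "\<phi> 0 = 0" using odd[of 0] by simp
  moreover have "0 \<le> \<phi> s + \<phi> t" if "0 \<le> s + t" for s t
    using monoD[OF mono, of "- t" s] that odd by simp
  moreover have "\<phi> s + \<phi> t \<le> 0" if "s + t \<le> 0" for s t
    using monoD[OF mono, of s "- t"] that odd by simp
  ultimately show ?thesis
    using y unfolding closed_chamber_def Weyl_def Rn_def by (auto intro: monoD[OF mono])
qed

lemma closed_chamber_pointed:
  assumes x: "x \<in> complement_set n"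
    and y: "y \<in> closed_chamber n x" and y': "(\<lambda>i. - y i) \<in> closed_chamber n x"
  shows "y = (\<lambda>_. 0)"
proof
  fix i
  show "y i = 0"
  proof (cases "1 \<le> i \<and> i \<le> n")
    case True
    have "x i + x i \<noteq> 0" using x True unfolding complement_set_iff by auto
    moreover have "(0 < x i + x i \<longrightarrow> 0 \<le> y i + y i) \<and> (x i + x i < 0 \<longrightarrow> y i + y i \<le> 0)"
      "(0 < x i + x i \<longrightarrow> 0 \<le> - y i + - y i) \<and> (x i + x i < 0 \<longrightarrow> - y i + - y i \<le> 0)"
      using y y' True unfolding closed_chamber_def by blast+
    ultimately show ?thesis by linarith
  next
    case False
    then show ?thesis using closed_chamber_Rn[OF y] unfolding Rn_def by (cases "i = 0") auto
  qed
qed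

definition lin :: "nat \<Rightarrow> (nat \<Rightarrow> real) \<Rightarrow> (nat \<Rightarrow> real) \<Rightarrow> real" where
  "lin n c y = (\<Sum>i=1..n. c i * y i)"

lemma lin_scale: "lin n c (\<lambda>i. t * y i) = t * lin n c y"
  unfolding lin_def by (simp add: sum_distrib_left algebra_simps)

lemma lin_scale_add: "lin n c (\<lambda>i. t * u i + r i) = t * lin n c u + lin n c r"
  unfolding lin_def by (simp add: sum_distrib_left sum.distrib algebra_simps)

definition extreme_subcone :: "(nat \<Rightarrow> real) set \<Rightarrow> (nat \<Rightarrow> real) set \<Rightarrow> bool" where
  "extreme_subcone K F \<longleftrightarrow> F \<subseteq> K \<and> (\<forall>y\<in>F. \<forall>t\<ge>0. (\<lambda>i. t * y i) \<in> F) \<and>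
     (\<forall>u\<in>K. \<forall>r\<in>K. \<forall>\<tau>>0. (\<lambda>i. \<tau> * u i + r i) \<in> F \<longrightarrow> u \<in> F)"

lemma supporting_hyperplane_cone_level_zero:
  assumes cone: "\<And>y t. y \<in> K \<Longrightarrow> 0 \<le> t \<Longrightarrow> (\<lambda>i. t * y i) \<in> K"
    and le: "\<forall>y\<in>K. lin n c y \<le> d" and y0: "y0 \<in> K" "lin n c y0 = d"
  shows "d = 0"
proof -
  have "lin n c (\<lambda>i. 2 * y0 i) \<le> d" "lin n c (\<lambda>i. 0 * y0 i) \<le> d"
    using bspec[OF le cone[OF y0(1), of 2]] bspec[OF le cone[OF y0(1), of 0]] by simp_all
  then show ?thesis using y0(2) unfolding lin_scale by simp
qed

lemma face_extreme_subcone: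
  assumes cone: "\<And>y t. y \<in> K \<Longrightarrow> 0 \<le> t \<Longrightarrow> (\<lambda>i. t * y i) \<in> K"
    and F: "F = K \<or> (\<exists>c d. (\<forall>y\<in>K. lin n c y \<le> d) \<and> (\<exists>y\<in>K. lin n c y = d) \<and>
                       F = {y \<in> K. lin n c y = d})"
  shows "extreme_subcone K F"
  using F
proof
  assume "F = K"
  then show ?thesis unfolding extreme_subcone_def using cone by auto
next
  assume "\<exists>c d. (\<forall>y\<in>K. lin n c y \<le> d) \<and> (\<exists>y\<in>K. lin n c y = d) \<and> F = {y \<in> K. lin n c y = d}"
  then obtain c d y0 where le: "\<forall>y\<in>K. lin n c y \<le> d" and F: "F = {y \<in> K. lin n c y = d}"
    and y0: "y0 \<in> K" "lin n c y0 = d" by blast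
  have d: "d = 0" by (rule supporting_hyperplane_cone_level_zero[OF cone le y0])
  have "u \<in> F" if u: "u \<in> K" and r: "r \<in> K" and \<tau>: "0 < \<tau>" and ur: "(\<lambda>i. \<tau> * u i + r i) \<in> F"
    for u r \<tau>
  proof -
    have "\<tau> * lin n c u + lin n c r = 0"
      using ur lin_scale_add[of n c \<tau> u r] unfolding F d by simp
    moreover have "lin n c u \<le> 0" "lin n c r \<le> 0" using le u r d by auto
    ultimately have "lin n c u = 0" using \<tau> by (smt (verit) mult_pos_neg)
    then show ?thesis using F u d by blast
  qed
  moreover have "(\<lambda>i. t * y i) \<in> F" if "y \<in> F" "0 \<le> t" for y t
    using that cone unfolding F d by (auto simp: lin_scale)
  moreover have "F \<subseteq> K" using F by blast
  ultimately show ?thesis unfolding extreme_subcone_def by blast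
qed

lemma in_ray_self: "v \<in> ray v"
  unfolding ray_def by (rule CollectI, rule exI[of _ 1]) auto

lemma ray_scale_eq:
  assumes "0 < s"
  shows "ray (\<lambda>i. s * w i) = ray w"
proof
  show "ray (\<lambda>i. s * w i) \<subseteq> ray w"
    unfolding ray_def using assms by (auto simp: mult.assoc[symmetric])
  show "ray w \<subseteq> ray (\<lambda>i. s * w i)"
  proof
    fix z assume "z \<in> ray w"
    then obtain t where t: "0 \<le> t" "z = (\<lambda>i. t * w i)" unfolding ray_def by auto
    then have "z = (\<lambda>i. (t / s) * (s * w i))" "0 \<le> t / s" using assms by auto
    then show "z \<in> ray (\<lambda>i. s * w i)" unfolding ray_def by blast
  qed
qed

lemma half_line_eq_ray:
  assumes hl: "is_half_line n F" and FK: "F \<subseteq> K"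
    and cone: "\<And>y t. y \<in> F \<Longrightarrow> 0 \<le> t \<Longrightarrow> (\<lambda>i. t * y i) \<in> F"
    and pointed: "\<And>y. y \<in> K \<Longrightarrow> (\<lambda>i. - y i) \<in> K \<Longrightarrow> y = (\<lambda>_. 0)"
  obtains w where "w \<in> Rn n" "w \<noteq> (\<lambda>_. 0)" "F = ray w"
proof -
  obtain p w where w: "w \<in> Rn n" "w \<noteq> (\<lambda>_. 0)" and F: "F = {(\<lambda>i. p i + t * w i) | t. t \<ge> 0}"
    using hl unfolding is_half_line_def by blast
  have pF: "p \<in> F" using F by force
  then have "(\<lambda>i. 0 * p i) \<in> F" using cone by blast
  then obtain t0 where t0: "0 \<le> t0" "(\<lambda>_. 0) = (\<lambda>i. p i + t0 * w i)" using F by auto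
  then have p: "p = (\<lambda>i. - (t0 * w i))" by (auto simp: fun_eq_iff add_eq_0_iff)
  have "(\<lambda>i. p i + (2 * t0) * w i) \<in> F" using F t0 by force
  then have "(\<lambda>i. t0 * w i) \<in> K" using FK p by (auto simp: algebra_simps)
  moreover have "(\<lambda>i. - (t0 * w i)) \<in> K" using pF FK p by auto
  ultimately have "(\<lambda>i. t0 * w i) = (\<lambda>_. 0)" using pointed by blast
  then have "t0 = 0" using w(2) by (metis mult_eq_0_iff)
  then have "F = ray w" unfolding F ray_def p by simp
  then show ?thesis using that w by blast
qed

lemma down_closed_eq_atLeastAtMost:
  assumes T: "T \<subseteq> {1..n}" and down: "\<And>i j. i \<in> T \<Longrightarrow> 1 \<le> j \<Longrightarrow> j \<le> i \<Longrightarrow> j \<in> T"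
  shows "T = {1..card T}"
proof (cases "T = {}")
  case False
  have fin: "finite T" using T finite_subset by blast
  define m where "m = Max T"
  have "m \<in> T" using fin False unfolding m_def by simp
  then have "T = {1..m}" using T down fin unfolding m_def by auto
  then show ?thesis by simp
qed simp

lemma up_closed_eq_greaterThanAtMost:
  assumes T: "T \<subseteq> {1..n}" and up: "\<And>i j. i \<in> T \<Longrightarrow> j \<le> n \<Longrightarrow> i \<le> j \<Longrightarrow> j \<in> T"
  shows "T = {n - card T<..n}"
proof (cases "T = {}")
  case False
  have fin: "finite T" using T finite_subset by blast
  define m where "m = Min T"
  have m: "m \<in> T" using fin False unfolding m_def by simp
  have T_eq: "T = {m..n}" using T up m fin unfolding m_def by auto
  then have "card T = n + 1 - m" by simp
  moreover have "1 \<le> m" "m \<le> n" using T m by auto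
  ultimately show ?thesis using T_eq by auto
qed simp

lemma sgn_eq_vv:
  assumes w: "w \<in> Weyl n"
  defines "a \<equiv> card {i\<in>{1..n}. 0 < w i}" and "b \<equiv> card {i\<in>{1..n}. w i < 0}"
  shows "(\<lambda>i. sgn (w i)) = vv n a b" and "a + b \<le> n"
proof -
  let ?P = "{i\<in>{1..n}. 0 < w i}" and ?N = "{i\<in>{1..n}. w i < 0}"
  have dec: "\<And>i j. 1 \<le> i \<Longrightarrow> i \<le> j \<Longrightarrow> j \<le> n \<Longrightarrow> w j \<le> w i"
    and out: "\<And>i. i < 1 \<or> n < i \<Longrightarrow> w i = 0"
    using w unfolding Weyl_def Rn_def by auto
  have P: "?P = {1..a}" unfolding a_def
    by (rule down_closed_eq_atLeastAtMost[of _ n]) (use dec in \<open>fastforce+\<close>)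
  have N: "?N = {n - b<..n}" unfolding b_def
    by (rule up_closed_eq_greaterThanAtMost[of _ n]) (use dec in \<open>fastforce+\<close>)
  have "a + b = card (?P \<union> ?N)" unfolding a_def b_def by (rule card_Un_disjoint[symmetric]) auto
  also have "\<dots> \<le> card {1..n}" by (rule card_mono) auto
  finally show ab: "a + b \<le> n" by simp
  show "(\<lambda>i. sgn (w i)) = vv n a b"
  proof
    fix i
    show "sgn (w i) = vv n a b i"
    proof (cases "1 \<le> i \<and> i \<le> n")
      case True
      then have "0 < w i \<longleftrightarrow> i \<le> a" "w i < 0 \<longleftrightarrow> n - b < i" using P N by auto
      then show ?thesis using True ab unfolding vv_def sgn_real_def by auto
    qed (use out ab in \<open>auto simp: vv_def\<close>)
  qed
qed

text \<open>Soft thresholding: s = \<tau> sgn s + soft \<tau> s whenever s = 0 or \<tau> \<le> |s|.\<close>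

definition soft :: "real \<Rightarrow> real \<Rightarrow> real" where
  "soft \<tau> s = (if \<tau> \<le> s then s - \<tau> else if s \<le> - \<tau> then s + \<tau> else 0)"

lemma mono_soft: "0 < \<tau> \<Longrightarrow> mono (soft \<tau>)"
  unfolding soft_def by (auto intro!: monoI)

lemma soft_minus: "0 < \<tau> \<Longrightarrow> soft \<tau> (- s) = - soft \<tau> s"
  unfolding soft_def by auto

lemma mono_sgn_real: "mono (sgn :: real \<Rightarrow> real)"
  by (auto intro!: monoI simp: sgn_real_def)

lemma extreme_subcone_ray_sgn:
  assumes w: "w \<in> Rn n" "w \<noteq> (\<lambda>_. 0)"
    and F: "extreme_subcone (closed_chamber n x) (ray w)"
  shows "ray w = ray (\<lambda>i. sgn (w i))"
proof -
  let ?K = "closed_chamber n x"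
  have wK: "w \<in> ?K" using F in_ray_self unfolding extreme_subcone_def by blast
  obtain i0 where i0: "w i0 \<noteq> 0" using w(2) by auto
  define M where "M = {\<bar>w i\<bar> | i. i \<in> {1..n} \<and> w i \<noteq> 0}"
  define \<tau> where "\<tau> = Min M"
  have supp: "1 \<le> i \<and> i \<le> n" if "w i \<noteq> 0" for i
  proof (rule ccontr)
    assume "\<not> (1 \<le> i \<and> i \<le> n)"
    then have "i < 1 \<or> n < i" by linarith
    then show False using w(1) that unfolding Rn_def by blast
  qed
  have M_fin: "finite M" unfolding M_def by simp
  have M_i0: "\<bar>w i0\<bar> \<in> M" unfolding M_def using i0 supp[OF i0] by auto
  have M_pos: "\<forall>m\<in>M. 0 < m" unfolding M_def by auto
  have \<tau>_pos: "0 < \<tau>"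
    unfolding \<tau>_def using Min_gr_iff[OF M_fin] M_i0 M_pos by blast
  have \<tau>_le: "\<tau> \<le> \<bar>w i\<bar>" if "w i \<noteq> 0" for i
  proof -
    have "\<bar>w i\<bar> \<in> M" unfolding M_def using that supp[OF that] by auto
    then show ?thesis unfolding \<tau>_def using M_fin by simp
  qed
  define u where "u = (\<lambda>i. sgn (w i))"
  define r where "r = (\<lambda>i. soft \<tau> (w i))"
  have uK: "u \<in> ?K" unfolding u_def
    by (rule closed_chamber_odd_mono_image[OF wK mono_sgn_real]) (simp add: sgn_real_def)
  have rK: "r \<in> ?K" unfolding r_def
    by (rule closed_chamber_odd_mono_image[OF wK mono_soft[OF \<tau>_pos] soft_minus[OF \<tau>_pos]])
  have w_split: "w = (\<lambda>i. \<tau> * u i + r i)"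
  proof
    fix i
    show "w i = \<tau> * u i + r i"
    proof (cases "w i = 0")
      case True then show ?thesis unfolding u_def r_def soft_def using \<tau>_pos by auto
    next
      case False
      then have "\<tau> \<le> \<bar>w i\<bar>" by (rule \<tau>_le)
      then show ?thesis unfolding u_def r_def soft_def using \<tau>_pos False
        by (auto simp: sgn_real_def)
    qed
  qed
  have "u \<in> ray w"
    using F uK rK \<tau>_pos in_ray_self[of w] w_split unfolding extreme_subcone_def by metis
  then obtain s where s: "0 \<le> s" "u = (\<lambda>i. s * w i)" unfolding ray_def by auto
  have "u i0 \<noteq> 0" unfolding u_def using i0 by (simp add: sgn_real_def)
  then have "0 < s" using s by (cases "s = 0") auto
  then have "ray u = ray w" using ray_scale_eq[of s w] s(2) by simp
  then show ?thesis unfolding u_def by simp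
qed

lemma extreme_ray_eq_ray_vv:
  assumes F: "F \<in> extreme_rays n"
  obtains a b where "(a, b) \<in> Estar n" "F = ray (vv n a b)"
proof -
  obtain C where C: "C \<in> chambers n" and FC: "F = C \<or>
     (\<exists>c d. (\<forall>y\<in>C. lin n c y \<le> d) \<and> (\<exists>y\<in>C. lin n c y = d) \<and> F = {y \<in> C. lin n c y = d})"
    using F unfolding extreme_rays_def is_face_def lin_def by blast
  obtain x where x: "x \<in> complement_set n" and Cx: "C = closed_chamber n x"
    using C chambers_eq by blast
  have ext: "extreme_subcone C F"
    using face_extreme_subcone[OF _ FC] closed_chamber_scale Cx by blast
  obtain w where w: "w \<in> Rn n" "w \<noteq> (\<lambda>_. 0)" and Fw: "F = ray w"
    using half_line_eq_ray[of n F C] F ext closed_chamber_pointed[OF x] Cx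
    unfolding extreme_rays_def extreme_subcone_def by blast
  have "w \<in> Weyl n"
    using ext in_ray_self Cx unfolding Fw extreme_subcone_def closed_chamber_def by blast
  then obtain a b where ab: "(\<lambda>i. sgn (w i)) = vv n a b" "a + b \<le> n" using sgn_eq_vv by metis
  have F_vv: "F = ray (vv n a b)"
    using extreme_subcone_ray_sgn[OF w] ext Cx ab(1) Fw by simp
  have "a + b \<noteq> 0"
  proof
    assume "a + b = 0"
    then have "(\<lambda>i. sgn (w i)) = (\<lambda>_. 0)" using ab(1) by (auto simp: vv_def fun_eq_iff)
    then show False using w(2) by (auto simp: fun_eq_iff sgn_eq_0_iff)
  qed
  then have "(a, b) \<in> Estar n" using ab(2) unfolding Estar_def by auto
  then show ?thesis using F_vv by (rule that)
qed

lemma vv_simps: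
  assumes "a + b \<le> n"
  shows "1 \<le> i \<Longrightarrow> i \<le> a \<Longrightarrow> vv n a b i = 1"
    and "a < i \<Longrightarrow> i \<le> n - b \<Longrightarrow> vv n a b i = 0"
    and "n - b < i \<Longrightarrow> i \<le> n \<Longrightarrow> vv n a b i = -1"
    and "i < 1 \<or> n < i \<Longrightarrow> vv n a b i = 0"
  using assms unfolding vv_def by auto

lemma vv_Rn: "a + b \<le> n \<Longrightarrow> vv n a b \<in> Rn n"
  unfolding Rn_def using vv_simps(4) by blast

lemma vv_Weyl:
  assumes "a + b \<le> n"
  shows "vv n a b \<in> Weyl n"
proof -
  have "vv n a b j \<le> vv n a b i" if "1 \<le> i" "i \<le> j" "j \<le> n" for i j
    using that assms unfolding vv_def by auto
  then show ?thesis unfolding Weyl_def using vv_Rn[OF assms] by auto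
qed

lemma vv_nonzero:
  assumes "(a, b) \<in> Estar n"
  shows "vv n a b \<noteq> (\<lambda>_. 0)"
proof
  assume vv0: "vv n a b = (\<lambda>_. 0)"
  have ab: "a + b \<le> n" "1 \<le> a + b" using assms unfolding Estar_def by auto
  show False
  proof (cases "1 \<le> a")
    case True
    then show ?thesis using vv_simps(1)[OF ab(1), of 1] vv0 by (simp add: fun_eq_iff)
  next
    case False
    then show ?thesis using vv_simps(3)[OF ab(1), of n] vv0 ab by (simp add: fun_eq_iff)
  qed
qed

lemma ray_vv_inj:
  assumes E: "(a, b) \<in> Estar n" "(a', b') \<in> Estar n"
    and eq: "ray (vv n a b) = ray (vv n a' b')"
  shows "a = a' \<and> b = b'"
proof -
  have ab: "a + b \<le> n" "a' + b' \<le> n" using E unfolding Estar_def by auto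
  have "vv n a b \<in> ray (vv n a' b')" using eq in_ray_self by blast
  then obtain t where t: "0 \<le> t" "vv n a b = (\<lambda>i. t * vv n a' b' i)" unfolding ray_def by auto
  have "t \<noteq> 0" using t vv_nonzero[OF E(1)] by auto
  then have "0 < t" using t by simp
  then have pos: "{i\<in>{1..n}. 0 < vv n a b i} = {i\<in>{1..n}. 0 < vv n a' b' i}"
    and neg: "{i\<in>{1..n}. vv n a b i < 0} = {i\<in>{1..n}. vv n a' b' i < 0}"
    using t(2) by (auto simp: zero_less_mult_iff mult_less_0_iff)
  have count: "card {i\<in>{1..n}. 0 < vv n c d i} = c" "card {i\<in>{1..n}. vv n c d i < 0} = d"
    if "c + d \<le> n" for c d
  proof -
    have "{i\<in>{1..n}. 0 < vv n c d i} = {1..c}" "{i\<in>{1..n}. vv n c d i < 0} = {n - d<..n}"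
      using that unfolding vv_def by auto
    then show "card {i\<in>{1..n}. 0 < vv n c d i} = c" "card {i\<in>{1..n}. vv n c d i < 0} = d"
      using that by simp_all
  qed
  show ?thesis
    using arg_cong[OF pos, of card] arg_cong[OF neg, of card] count[OF ab(1)] count[OF ab(2)]
    by simp
qed

text \<open>A point of the complement whose chamber contains v(a,b): its coordinates are about 5n on the
  first a indices, in [1, n] on the middle ones and below -2n on the last b, so that
  x_i + x_j > 0 exactly when v_i + v_j > 0, or v_i + v_j = 0 and i \<le> n - b.\<close>

definition chamber_witness :: "nat \<Rightarrow> nat \<Rightarrow> nat \<Rightarrow> nat \<Rightarrow> real" where
  "chamber_witness n a b i = (if 1 \<le> i \<and> i \<le> n then (if i \<le> a then 5 * real n - real i
      else if i \<le> n - b then real n + 1 - real i else - (2 * real n + real i) - 1/2) else 0)"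

lemma chamber_witness_bounds:
  assumes ab: "a + b \<le> n" and i: "1 \<le> i" "i \<le> n"
  shows "i \<le> a \<Longrightarrow>
      chamber_witness n a b i = 5 * real n - real i \<and> 4 * real n \<le> chamber_witness n a b i"
    and "a < i \<Longrightarrow> i \<le> n - b \<Longrightarrow>
      chamber_witness n a b i = real n + 1 - real i \<and>
      1 \<le> chamber_witness n a b i \<and> chamber_witness n a b i \<le> real n"
    and "n - b < i \<Longrightarrow>
      chamber_witness n a b i = - (2 * real n + real i) - 1/2 \<and>
      chamber_witness n a b i \<le> - (2 * real n + 1) - 1/2 \<and> - (3 * real n) - 1/2 \<le> chamber_witness n a b i"
  using ab i unfolding chamber_witness_def by auto

lemma chamber_witness_sign:
  assumes ab: "a + b \<le> n" and ij: "1 \<le> i" "i \<le> j" "j \<le> n"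
  shows "(0 < chamber_witness n a b i + chamber_witness n a b j \<longleftrightarrow>
           i \<le> n - b \<and> (i \<le> a \<or> j \<le> n - b)) \<and>
         (chamber_witness n a b i + chamber_witness n a b j < 0 \<longleftrightarrow>
           \<not> (i \<le> n - b \<and> (i \<le> a \<or> j \<le> n - b)))"
proof -
  have j1: "1 \<le> j" using ij by simp
  have rij: "real i \<le> real j" "real j \<le> real n" "1 \<le> real i" "real i \<le> real n" using ij by auto
  note bi = chamber_witness_bounds[OF ab ij(1) order.trans[OF ij(2,3)]]
  note bj = chamber_witness_bounds[OF ab j1 ij(3)]
  consider "i \<le> a" | "a < i \<and> i \<le> n - b" | "n - b < i" by linarith
  then show ?thesis
  proof cases
    case 1
    consider "j \<le> a" | "a < j \<and> j \<le> n - b" | "n - b < j" by linarith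
    then show ?thesis
    proof cases
      case 1 then show ?thesis using bi bj \<open>i \<le> a\<close> ab rij by auto
    next
      case 2 then show ?thesis using bi bj \<open>i \<le> a\<close> ab rij by auto
    next
      case 3 then show ?thesis using bi(1)[OF \<open>i \<le> a\<close>] bj(3)[OF 3] \<open>i \<le> a\<close> ab rij by auto
    qed
  next
    case 2
    then have ja: "a < j" using ij by simp
    consider "j \<le> n - b" | "n - b < j" by linarith
    then show ?thesis
    proof cases
      case 1 then show ?thesis using bi(2) bj(2)[OF ja 1] 2 rij by auto
    next
      case 3: 2 then show ?thesis using bi(2) bj(3)[OF 3] 2 rij by auto
    qed
  next
    case 3
    then have "n - b < j" using ij by simp
    then show ?thesis using bi(3)[OF 3] bj(3) 3 rij by auto
  qed
qed

lemma chamber_witness_in_complement: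
  assumes ab: "a + b \<le> n"
  shows "chamber_witness n a b \<in> complement_set n"
proof -
  have R: "chamber_witness n a b \<in> Rn n" unfolding Rn_def chamber_witness_def by auto
  have D: "chamber_witness n a b j < chamber_witness n a b i" if ij: "1 \<le> i" "i < j" "j \<le> n" for i j
  proof -
    have j1: "1 \<le> j" using ij by simp
    have rij: "real i < real j" "real j \<le> real n" "1 \<le> real i" using ij by auto
    note bi = chamber_witness_bounds[OF ab ij(1) order.trans[OF less_imp_le[OF ij(2)] ij(3)]]
    note bj = chamber_witness_bounds[OF ab j1 ij(3)]
    consider "j \<le> a" | "i \<le> a \<and> a < j \<and> j \<le> n - b" | "i \<le> a \<and> n - b < j"
      | "a < i \<and> j \<le> n - b" | "a < i \<and> i \<le> n - b \<and> n - b < j" | "n - b < i" by linarith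
    then show ?thesis
    proof cases
      case 1 then show ?thesis using bi(1) bj(1) ij rij by auto
    next
      case 2 then show ?thesis using bi(1) bj(2) rij by auto
    next
      case 3 then show ?thesis using bi(1) bj(3) rij by auto
    next
      case 4 then show ?thesis using bi(2) bj(2) rij ij by auto
    next
      case 5 then show ?thesis using bi(2) bj(3) rij by auto
    next
      case 6 then show ?thesis using bi(3) bj(3) rij ij by auto
    qed
  qed
  have W: "chamber_witness n a b \<in> Weyl0 n" using R D unfolding Weyl0_def by auto
  show ?thesis unfolding complement_set_iff using W chamber_witness_sign[OF ab]
    by (metis less_irrefl)
qed

definition pos_pair :: "nat \<Rightarrow> nat \<Rightarrow> nat \<Rightarrow> nat \<Rightarrow> nat \<Rightarrow> bool" where
  "pos_pair n a b i j \<longleftrightarrow> i \<le> n - b \<and> (i \<le> a \<or> j \<le> n - b)"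

lemma closed_chamber_witness_iff:
  assumes "a + b \<le> n"
  shows "y \<in> closed_chamber n (chamber_witness n a b) \<longleftrightarrow> y \<in> Weyl n \<and>
    (\<forall>i j. 1 \<le> i \<longrightarrow> i \<le> j \<longrightarrow> j \<le> n \<longrightarrow>
       (pos_pair n a b i j \<longrightarrow> 0 \<le> y i + y j) \<and> (\<not> pos_pair n a b i j \<longrightarrow> y i + y j \<le> 0))"
  unfolding closed_chamber_def pos_pair_def using chamber_witness_sign[OF assms] by auto

lemma vv_in_closed_chamber_witness:
  assumes ab: "a + b \<le> n"
  shows "vv n a b \<in> closed_chamber n (chamber_witness n a b)"
proof -
  have "(pos_pair n a b i j \<longrightarrow> 0 \<le> vv n a b i + vv n a b j) \<and>
        (\<not> pos_pair n a b i j \<longrightarrow> vv n a b i + vv n a b j \<le> 0)"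
    if "1 \<le> i" "i \<le> j" "j \<le> n" for i j
    using that ab unfolding vv_def pos_pair_def by auto
  then show ?thesis unfolding closed_chamber_witness_iff[OF ab] using vv_Weyl[OF ab] by auto
qed

lemma closed_chamber_witness_signs:
  assumes ab: "a + b \<le> n" and y: "y \<in> closed_chamber n (chamber_witness n a b)"
  shows "\<And>i j. 1 \<le> i \<Longrightarrow> i \<le> j \<Longrightarrow> j \<le> n \<Longrightarrow> y j \<le> y i"
    and "\<And>i. i < 1 \<or> n < i \<Longrightarrow> y i = 0"
    and "\<And>i. 1 \<le> i \<Longrightarrow> i \<le> n - b \<Longrightarrow> 0 \<le> y i"
    and "\<And>i. n - b < i \<Longrightarrow> i \<le> n \<Longrightarrow> y i \<le> 0"
    and "\<And>i j. 1 \<le> i \<Longrightarrow> i \<le> a \<Longrightarrow> n - b < j \<Longrightarrow> j \<le> n \<Longrightarrow> 0 \<le> y i + y j"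
proof -
  have yW: "y \<in> Weyl n" and yQ: "\<And>i j. 1 \<le> i \<Longrightarrow> i \<le> j \<Longrightarrow> j \<le> n \<Longrightarrow>
     (pos_pair n a b i j \<longrightarrow> 0 \<le> y i + y j) \<and> (\<not> pos_pair n a b i j \<longrightarrow> y i + y j \<le> 0)"
    using y unfolding closed_chamber_witness_iff[OF ab] by auto
  show "\<And>i j. 1 \<le> i \<Longrightarrow> i \<le> j \<Longrightarrow> j \<le> n \<Longrightarrow> y j \<le> y i"
    and "\<And>i. i < 1 \<or> n < i \<Longrightarrow> y i = 0"
    using yW unfolding Weyl_def Rn_def by auto
  show "0 \<le> y i" if "1 \<le> i" "i \<le> n - b" for i
    using yQ[of i i] that unfolding pos_pair_def by auto
  show "y i \<le> 0" if "n - b < i" "i \<le> n" for i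
    using yQ[of i i] that unfolding pos_pair_def by auto
  show "0 \<le> y i + y j" if "1 \<le> i" "i \<le> a" "n - b < j" "j \<le> n" for i j
    using yQ[of i j] that ab unfolding pos_pair_def by auto
qed

definition ray_functional :: "nat \<Rightarrow> nat \<Rightarrow> nat \<Rightarrow> (nat \<Rightarrow> real) \<Rightarrow> real" where
  "ray_functional n a b y =
     (if 1 \<le> a then y 1 - y a else 0) + (if 1 \<le> b then y (n - b + 1) - y n else 0)
     + (if a + b < n then y (a + 1) else 0) + (if 1 \<le> a \<and> 1 \<le> b then y a + y (n - b + 1) else 0)"

lemma ray_functional_summands_nonneg:
  assumes ab: "a + b \<le> n" and y: "y \<in> closed_chamber n (chamber_witness n a b)"
  shows "0 \<le> (if 1 \<le> a then y 1 - y a else 0)"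
    and "0 \<le> (if 1 \<le> b then y (n - b + 1) - y n else 0)"
    and "0 \<le> (if a + b < n then y (a + 1) else 0)"
    and "0 \<le> (if 1 \<le> a \<and> 1 \<le> b then y a + y (n - b + 1) else 0)"
proof -
  note sg = closed_chamber_witness_signs[OF ab y]
  show "0 \<le> (if 1 \<le> a then y 1 - y a else 0)" using sg(1)[of 1 a] ab by auto
  show "0 \<le> (if 1 \<le> b then y (n - b + 1) - y n else 0)"
    using sg(1)[of "n - b + 1" n] ab by auto
  show "0 \<le> (if a + b < n then y (a + 1) else 0)" using sg(3)[of "a + 1"] by auto
  show "0 \<le> (if 1 \<le> a \<and> 1 \<le> b then y a + y (n - b + 1) else 0)"
    using sg(5)[of a "n - b + 1"] ab by auto
qed

lemma ray_functional_nonneg: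
  assumes "a + b \<le> n" and "y \<in> closed_chamber n (chamber_witness n a b)"
  shows "0 \<le> ray_functional n a b y"
  using ray_functional_summands_nonneg[OF assms] unfolding ray_functional_def by linarith

lemma ray_functional_eq_0_imp_in_ray:
  assumes E: "(a, b) \<in> Estar n" and y: "y \<in> closed_chamber n (chamber_witness n a b)"
    and \<phi>: "ray_functional n a b y = 0"
  shows "y \<in> ray (vv n a b)"
proof -
  have ab: "a + b \<le> n" and ab1: "1 \<le> a + b" using E unfolding Estar_def by auto
  note sg = closed_chamber_witness_signs[OF ab y]
  note summands = ray_functional_summands_nonneg[OF ab y]
  have z: "1 \<le> a \<Longrightarrow> y 1 = y a" "1 \<le> b \<Longrightarrow> y (n - b + 1) = y n"
      "a + b < n \<Longrightarrow> y (a + 1) = 0" "1 \<le> a \<Longrightarrow> 1 \<le> b \<Longrightarrow> y a + y (n - b + 1) = 0"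
    using \<phi> summands unfolding ray_functional_def by (smt (verit))+
  define \<alpha> where "\<alpha> = (if 1 \<le> a then y 1 else - y n)"
  have "0 \<le> \<alpha>" unfolding \<alpha>_def using sg(3)[of 1] sg(4)[of n] ab ab1 by auto
  moreover have "y i = \<alpha> * vv n a b i" for i
  proof -
    consider "i < 1 \<or> n < i" | "1 \<le> i" "i \<le> a" | "a < i" "i \<le> n - b" "1 \<le> i"
      | "n - b < i" "i \<le> n"
      by linarith
    then show ?thesis
    proof cases
      case 1 then show ?thesis using sg(2) vv_simps(4)[OF ab] by auto
    next
      case 2
      then have "y i = y 1" using sg(1)[of 1 i] sg(1)[of i a] z(1) ab by fastforce
      then show ?thesis using 2 vv_simps(1)[OF ab] unfolding \<alpha>_def by auto
    next
      case 3
      then have "y (a + 1) = 0" using z(3) by auto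
      then have "y i = 0" using sg(1)[of "a + 1" i] sg(3)[of i] 3 by fastforce
      then show ?thesis using 3 vv_simps(2)[OF ab] by auto
    next
      case 4
      then have b1: "1 \<le> b" by linarith
      have "y i = y n" "y i = y (n - b + 1)"
        using sg(1)[of "n - b + 1" i] sg(1)[of i n] z(2)[OF b1] 4 ab by fastforce+
      moreover have "y a = y 1" if "1 \<le> a" using z(1)[OF that] by simp
      ultimately show ?thesis
        using z(4) b1 vv_simps(3)[OF ab 4] unfolding \<alpha>_def by auto
    qed
  qed
  ultimately show ?thesis unfolding ray_def by auto
qed

definition unit_coeff :: "nat \<Rightarrow> nat \<Rightarrow> real" where
  "unit_coeff p i = (if i = p then 1 else 0)"

definition ray_functional_coeffs :: "nat \<Rightarrow> nat \<Rightarrow> nat \<Rightarrow> nat \<Rightarrow> real" where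
  "ray_functional_coeffs n a b = (\<lambda>i. - (
     (if 1 \<le> a then unit_coeff 1 i - unit_coeff a i else 0)
     + (if 1 \<le> b then unit_coeff (n - b + 1) i - unit_coeff n i else 0)
     + (if a + b < n then unit_coeff (a + 1) i else 0)
     + (if 1 \<le> a \<and> 1 \<le> b then unit_coeff a i + unit_coeff (n - b + 1) i else 0)))"

lemma lin_unit_coeff:
  assumes "y \<in> Rn n"
  shows "lin n (unit_coeff p) y = y p"
proof -
  have "lin n (unit_coeff p) y = (\<Sum>i=1..n. if i = p then y p else 0)"
    unfolding lin_def unit_coeff_def by (intro sum.cong) auto
  also have "\<dots> = (if p \<in> {1..n} then y p else 0)" by (rule sum.delta) simp
  also have "\<dots> = y p" using assms unfolding Rn_def by (cases "p = 0") auto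
  finally show ?thesis .
qed

lemma lin_ray_functional_coeffs:
  assumes "y \<in> Rn n"
  shows "lin n (ray_functional_coeffs n a b) y = - ray_functional n a b y"
proof -
  have lin_lc: "lin n (\<lambda>i. - f i) y = - lin n f y" "lin n (\<lambda>i. f i + g i) y = lin n f y + lin n g y"
    "lin n (\<lambda>i. f i - g i) y = lin n f y - lin n g y"
    "lin n (\<lambda>i. if P then f i else 0) y = (if P then lin n f y else 0)" for f g P
    unfolding lin_def by (simp_all add: sum_negf sum.distrib sum_subtractf algebra_simps)
  show ?thesis
    unfolding ray_functional_coeffs_def ray_functional_def
    by (simp only: lin_lc lin_unit_coeff[OF assms])
qed

lemma ray_vv_extreme:
  assumes E: "(a, b) \<in> Estar n"
  shows "ray (vv n a b) \<in> extreme_rays n"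
proof -
  have ab: "a + b \<le> n" using E unfolding Estar_def by auto
  let ?v = "vv n a b" and ?K = "closed_chamber n (chamber_witness n a b)"
    and ?c = "ray_functional_coeffs n a b"
  have "ray ?v = {(\<lambda>i. (\<lambda>_. 0::real) i + t * ?v i) | t. 0 \<le> t}" unfolding ray_def by simp
  then have "\<exists>v\<in>Rn n. v \<noteq> (\<lambda>_. 0) \<and> ray ?v = {(\<lambda>i. (\<lambda>_. 0::real) i + t * v i) | t. 0 \<le> t}"
    using vv_Rn[OF ab] vv_nonzero[OF E] by blast
  moreover have "(\<lambda>_. 0::real) \<in> Rn n" unfolding Rn_def by simp
  ultimately have half_line: "is_half_line n (ray ?v)"
    unfolding is_half_line_def by (rule bexI[where x="\<lambda>_. 0"])
  have C: "?K \<in> chambers n" unfolding chambers_eq using chamber_witness_in_complement[OF ab] by blast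
  have lin_c: "(\<Sum>i=1..n. ?c i * y i) = - ray_functional n a b y" if "y \<in> ?K" for y
    using lin_ray_functional_coeffs closed_chamber_Rn[OF that] unfolding lin_def by blast
  have ray_eq: "ray ?v = {y \<in> ?K. ray_functional n a b y = 0}"
  proof
    show "ray ?v \<subseteq> {y \<in> ?K. ray_functional n a b y = 0}"
    proof
      fix z assume "z \<in> ray ?v"
      then obtain t where t: "0 \<le> t" "z = (\<lambda>i. t * ?v i)" unfolding ray_def by auto
      moreover have "ray_functional n a b (\<lambda>i. t * ?v i) = t * ray_functional n a b ?v"
        unfolding ray_functional_def by (simp add: algebra_simps)
      moreover have "ray_functional n a b ?v = 0" using ab unfolding ray_functional_def vv_def by auto
      ultimately show "z \<in> {y \<in> ?K. ray_functional n a b y = 0}"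
        using closed_chamber_scale[OF vv_in_closed_chamber_witness[OF ab] t(1)] by auto
    qed
  qed (use ray_functional_eq_0_imp_in_ray[OF E] in blast)
  have "is_face n (ray ?v)"
  proof (cases "\<exists>i\<in>{1..n}. ?c i \<noteq> 0")
    case True
    show ?thesis unfolding is_face_def
    proof (rule bexI[OF _ C], rule disjI2, intro exI conjI)
      show "\<forall>y\<in>?K. (\<Sum>i=1..n. ?c i * y i) \<le> 0"
        using lin_c ray_functional_nonneg[OF ab] by auto
      show "\<exists>y\<in>?K. (\<Sum>i=1..n. ?c i * y i) = 0"
        using lin_c ray_eq in_ray_self by fastforce
      show "ray ?v = {y \<in> ?K. (\<Sum>i=1..n. ?c i * y i) = 0}" unfolding ray_eq using lin_c by auto
    qed (rule True)
  next
    case False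
    then have "ray_functional n a b y = 0" if "y \<in> ?K" for y
      using lin_c[OF that] by simp
    then have "ray ?v = ?K" unfolding ray_eq by auto
    then show ?thesis unfolding is_face_def using C by blast
  qed
  then show ?thesis unfolding extreme_rays_def using half_line by auto
qed

lemma bij_betw_ray_vv_extreme_rays:
  "bij_betw (\<lambda>(a, b). ray (vv n a b)) (Estar n) (extreme_rays n)"
  unfolding bij_betw_def
proof
  show "inj_on (\<lambda>(a, b). ray (vv n a b)) (Estar n)"
    unfolding inj_on_def using ray_vv_inj by fast
  show "(\<lambda>(a, b). ray (vv n a b)) ` Estar n = extreme_rays n"
  proof
    show "extreme_rays n \<subseteq> (\<lambda>(a, b). ray (vv n a b)) ` Estar n"
    proof
      fix F assume "F \<in> extreme_rays n"
      then obtain a b where "(a, b) \<in> Estar n" "F = ray (vv n a b)" by (rule extreme_ray_eq_ray_vv)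
      then show "F \<in> (\<lambda>(a, b). ray (vv n a b)) ` Estar n" by force
    qed
  qed (use ray_vv_extreme in auto)
qed

section \<open>Extreme rays in the chamber C(S)\<close>

lemma Sel_mem:
  assumes "finite S" "1 \<le> i" "i \<le> card S"
  shows "Sel S i \<in> S"
proof -
  have "rev (sorted_list_of_set S) ! (i - 1) \<in> set (rev (sorted_list_of_set S))"
    by (rule nth_mem) (use assms in simp)
  then show ?thesis unfolding Sel_def using assms(1) by simp
qed

lemma Sel_strict_antimono:
  assumes "finite S" "1 \<le> i" "i < j" "j \<le> card S"
  shows "Sel S j < Sel S i"
proof -
  have "sorted_wrt (>) (rev (sorted_list_of_set S))"
    unfolding sorted_wrt_rev using sorted_list_of_set.strict_sorted_key_list_of_set[of S] by simp
  then have "rev (sorted_list_of_set S) ! (i - 1) > rev (sorted_list_of_set S) ! (j - 1)"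
    by (rule sorted_wrt_nth_less) (use assms in auto)
  then show ?thesis unfolding Sel_def .
qed

lemma image_Sel:
  assumes "finite S"
  shows "Sel S ` {1..card S} = S"
proof
  show "Sel S ` {1..card S} \<subseteq> S" using Sel_mem[OF assms] by auto
  show "S \<subseteq> Sel S ` {1..card S}"
  proof
    fix x assume "x \<in> S"
    then obtain p where p: "p < length (rev (sorted_list_of_set S))" "rev (sorted_list_of_set S) ! p = x"
      using assms by (metis in_set_conv_nth set_rev sorted_list_of_set.set_sorted_key_list_of_set)
    then have "Sel S (p + 1) = x" "p + 1 \<in> {1..card S}" unfolding Sel_def by auto
    then show "x \<in> Sel S ` {1..card S}" by (metis image_eqI)
  qed
qed

lemma Sel_gap:
  assumes "finite S" "1 \<le> i" "i \<le> j" "j \<le> card S"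
  shows "Sel S j + (j - i) \<le> Sel S i"
  using assms(3,4)
proof (induction j)
  case (Suc j)
  show ?case
  proof (cases "i = Suc j")
    case False
    then have "i \<le> j" using Suc by simp
    moreover have "Sel S (Suc j) < Sel S j"
      using Suc \<open>i \<le> j\<close> assms(2) Sel_strict_antimono[OF assms(1), of j "Suc j"] by simp
    ultimately show ?thesis using Suc by simp
  qed simp
qed simp

lemma le_Sel_iff:
  assumes fin: "finite S" and i: "1 \<le> i" "i \<le> card S"
  shows "\<theta> \<le> Sel S i \<longleftrightarrow> i \<le> card (S \<inter> {\<theta>..})"
proof -
  define T where "T = {i\<in>{1..card S}. \<theta> \<le> Sel S i}"
  have inj: "inj_on (Sel S) {1..card S}"
    by (rule inj_onI) (metis Sel_strict_antimono[OF fin] atLeastAtMost_iff linorder_neqE_nat less_irrefl)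
  have image_T: "S \<inter> {\<theta>..} = Sel S ` T"
  proof
    show "Sel S ` T \<subseteq> S \<inter> {\<theta>..}" unfolding T_def using Sel_mem[OF fin] by auto
    show "S \<inter> {\<theta>..} \<subseteq> Sel S ` T"
    proof
      fix x assume x: "x \<in> S \<inter> {\<theta>..}"
      then obtain i where "i \<in> {1..card S}" "x = Sel S i" using image_Sel[OF fin] by blast
      then show "x \<in> Sel S ` T" unfolding T_def using x by auto
    qed
  qed
  have "T \<subseteq> {1..card S}" unfolding T_def by auto
  then have card_T: "card (S \<inter> {\<theta>..}) = card T"
    unfolding image_T by (intro card_image inj_on_subset[OF inj])
  have "T = {1..card T}"
  proof (rule down_closed_eq_atLeastAtMost[of _ "card S"])
    fix i j assume "i \<in> T" "1 \<le> j" "j \<le> i"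
    then show "j \<in> T" unfolding T_def using Sel_gap[OF fin, of j i] by auto
  qed (auto simp: T_def)
  then show ?thesis unfolding card_T using i unfolding T_def
    by (metis (no_types, lifting) atLeastAtMost_iff mem_Collect_eq)
qed

lemma piS_le:
  assumes "S \<subseteq> {1..n}" "l \<le> n"
  shows "piS n S l \<le> card S" and "piS n S l \<le> l"
proof -
  have "finite S" using assms(1) finite_subset by blast
  then show "piS n S l \<le> card S" unfolding piS_def by (simp add: card_mono)
  have "S \<inter> {n - l + 1..} \<subseteq> {n - l + 1..n}" using assms(1) by auto
  then have "piS n S l \<le> card {n - l + 1..n}" unfolding piS_def by (intro card_mono) auto
  then show "piS n S l \<le> l" using assms(2) by simp
qed

text \<open>Row i of the sign tableau of C(S) has its plus signs in columns i, ..., i + Sel S i - 1.\<close>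

definition tableau_plus :: "nat set \<Rightarrow> nat \<Rightarrow> nat \<Rightarrow> bool" where
  "tableau_plus S i j \<longleftrightarrow> i \<le> card S \<and> j + 1 \<le> i + Sel S i"

lemma CS_iff:
  "y \<in> CS n S \<longleftrightarrow> y \<in> Weyl n \<and> (\<forall>i j. 1 \<le> i \<longrightarrow> i \<le> j \<longrightarrow> j \<le> n \<longrightarrow>
     (tableau_plus S i j \<longrightarrow> 0 \<le> y i + y j) \<and> (\<not> tableau_plus S i j \<longrightarrow> y i + y j \<le> 0))"
  unfolding CS_def tableau_plus_def by auto

lemma CS_scale:
  assumes v: "v \<in> CS n S" and t: "0 \<le> t"
  shows "(\<lambda>i. t * v i) \<in> CS n S"
proof -
  have "(\<lambda>i. t * v i) \<in> Weyl n" using v t unfolding CS_def Weyl_def Rn_def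
    by (auto intro: mult_left_mono)
  then show ?thesis using v t unfolding CS_def
    by (auto simp: distrib_left[symmetric] mult_nonneg_nonpos split: if_splits)
qed

lemma ray_subset_CS_iff: "ray v \<subseteq> CS n S \<longleftrightarrow> v \<in> CS n S"
  using in_ray_self CS_scale unfolding ray_def by blast

text \<open>With \<theta> = n - (a + b) + 1, the entries of v(a,b) are 1, 0 and -1 on [1,a], (a,n-b] and
  (n-b,n], and Sel S i \<ge> \<theta> exactly for the first \<pi>^S_(a+b) rows.\<close>

lemma vv_in_CS_imp_eq_piS:
  assumes S: "S \<subseteq> {1..n}" and E: "(a, b) \<in> Estar n" and v: "vv n a b \<in> CS n S"
  shows "a = piS n S (a + b)"
proof -
  have fin: "finite S" using S finite_subset by blast
  have ab: "a + b \<le> n" "1 \<le> a + b" using E unfolding Estar_def by auto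
  let ?k = "card S" and ?s = "Sel S" and ?v = "vv n a b" and ?\<pi> = "piS n S (a + b)"
  define c where "c = n - b"
  have c: "a \<le> c" "c \<le> n" "n - (a + b) + 1 = c - a + 1" unfolding c_def using ab by auto
  have F1: "c - a + 1 \<le> ?s i \<longleftrightarrow> i \<le> ?\<pi>" if "1 \<le> i" "i \<le> ?k" for i
    using le_Sel_iff[OF fin that] c(3) unfolding piS_def by simp
  have s_range: "1 \<le> ?s i \<and> ?s i \<le> n" if "1 \<le> i" "i \<le> ?k" for i
    using Sel_mem[OF fin that] S by force
  note vs = vv_simps[OF ab(1), folded c_def]
  have H: "(tableau_plus S i j \<longrightarrow> 0 \<le> ?v i + ?v j) \<and> (\<not> tableau_plus S i j \<longrightarrow> ?v i + ?v j \<le> 0)"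
    if "1 \<le> i" "i \<le> j" "j \<le> n" for i j
    using v that unfolding CS_iff by blast
  have "a \<le> ?\<pi>"
  proof (cases "a = 0")
    case False
    then have a1: "1 \<le> a" by simp
    have "0 < ?v a + ?v c"
      using vs(1)[OF a1 order.refl] vs(1)[of c] vs(2)[of c] c by (cases "a = c") auto
    then have "tableau_plus S a c" using H[of a c] a1 c by auto
    then show ?thesis using F1[OF a1] c unfolding tableau_plus_def by auto
  qed simp
  moreover have "\<not> ?\<pi> > a"
  proof
    assume "a < ?\<pi>"
    then have ak: "a + 1 \<le> ?k" and sa: "c - a + 1 \<le> ?s (a + 1)"
      using F1[of "a + 1"] piS_le(1)[OF S, of "a + b"] ab by auto
    show False
    proof (cases "b = 0")
      case True
      have "?s (a + 1) + a \<le> ?s 1" using Sel_gap[OF fin, of 1 "a + 1"] ak by simp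
      then show False using sa s_range[of 1] ak True unfolding c_def by simp
    next
      case False
      then have cn: "c < n" unfolding c_def using ab by simp
      show False
      proof (cases "a + 1 \<le> c")
        case True
        then have "?v (a + 1) + ?v (c + 1) < 0" using vs(2)[of "a + 1"] vs(3)[of "c + 1"] cn by simp
        then have "\<not> tableau_plus S (a + 1) (c + 1)" using H[of "a + 1" "c + 1"] True cn by auto
        then show False using ak sa c unfolding tableau_plus_def by auto
      next
        case False
        then have "?v (a + 1) + ?v (a + 1) < 0" using vs(3)[of "a + 1"] c cn by simp
        then have "\<not> tableau_plus S (a + 1) (a + 1)" using H[of "a + 1" "a + 1"] c cn by auto
        then show False using ak s_range[of "a + 1"] unfolding tableau_plus_def by auto
      qed
    qed
  qed
  ultimately show ?thesis by simp
qed

lemma vv_in_CS_if_eq_piS: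
  assumes S: "S \<subseteq> {1..n}" and E: "(a, b) \<in> Estar n" and a: "a = piS n S (a + b)"
  shows "vv n a b \<in> CS n S"
proof -
  have fin: "finite S" using S finite_subset by blast
  have ab: "a + b \<le> n" "1 \<le> a + b" using E unfolding Estar_def by auto
  let ?k = "card S" and ?s = "Sel S" and ?v = "vv n a b"
  define c where "c = n - b"
  have c: "a \<le> c" "c \<le> n" "n - (a + b) + 1 = c - a + 1" unfolding c_def using ab by auto
  have F1: "c - a + 1 \<le> ?s i \<longleftrightarrow> i \<le> a" if "1 \<le> i" "i \<le> ?k" for i
    using le_Sel_iff[OF fin that] c(3) a unfolding piS_def by simp
  have ak: "a \<le> ?k" using a piS_le(1)[OF S, of "a + b"] ab by simp
  have s_last: "?s (a + 1) < c - a + 1" if "a + 1 \<le> ?k" using F1[of "a + 1"] that by auto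
  have s_first: "c - a + 1 \<le> ?s a" if "1 \<le> a" using F1[of a] that ak by auto
  note vs = vv_simps[OF ab(1), folded c_def]
  have "(tableau_plus S i j \<longrightarrow> 0 \<le> ?v i + ?v j) \<and> (\<not> tableau_plus S i j \<longrightarrow> ?v i + ?v j \<le> 0)"
    if ij: "1 \<le> i" "i \<le> j" "j \<le> n" for i j
  proof -
    consider "i \<le> a" "j \<le> c" | "i \<le> a" "c < j" | "a < i" "i \<le> c" "j \<le> c"
      | "a < i" "c < j" using ij by linarith
    then show ?thesis
    proof cases
      case 1
      have "?s a + (a - i) \<le> ?s i" using Sel_gap[OF fin, of i a] ij 1 ak by simp
      then have "tableau_plus S i j" unfolding tableau_plus_def using s_first ij 1 ak c by auto
      moreover have "-1 \<le> ?v j" unfolding vv_def by auto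
      ultimately show ?thesis using vs(1) ij 1 by auto
    next
      case 2
      then show ?thesis using vs(1)[of i] vs(3)[of j] ij by simp
    next
      case 3
      then show ?thesis using vs(2)[of i] vs(2)[of j] ij by simp
    next
      case 4
      have "\<not> tableau_plus S i j"
      proof
        assume p: "tableau_plus S i j"
        then have ik: "i \<le> ?k" unfolding tableau_plus_def by simp
        have "?s i + (i - (a + 1)) \<le> ?s (a + 1)" using Sel_gap[OF fin, of "a + 1" i] 4 ik by simp
        moreover have "1 \<le> ?s i" using Sel_mem[OF fin _ ik] S 4 by force
        ultimately show False using p s_last 4 ik c unfolding tableau_plus_def by auto
      qed
      moreover have "?v i \<le> 0" "?v j = -1" using vs(2)[of i] vs(3)[of i] vs(3)[of j] 4 ij
        by (cases "i \<le> c"; simp)+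
      ultimately show ?thesis by simp
    qed
  qed
  then show ?thesis unfolding CS_iff using vv_Weyl[OF ab(1)] by blast
qed

lemma extreme_rays_in_CS:
  assumes S: "S \<subseteq> {1..n}"
  shows "{r \<in> extreme_rays n. r \<subseteq> CS n S} = (\<lambda>l. ray (vv n (piS n S l) (l - piS n S l))) ` {1..n}"
proof
  show "{r \<in> extreme_rays n. r \<subseteq> CS n S} \<subseteq> (\<lambda>l. ray (vv n (piS n S l) (l - piS n S l))) ` {1..n}"
  proof
    fix r assume r: "r \<in> {r \<in> extreme_rays n. r \<subseteq> CS n S}"
    then obtain a b where E: "(a, b) \<in> Estar n" and r_eq: "r = ray (vv n a b)"
      using extreme_ray_eq_ray_vv by blast
    then have "a = piS n S (a + b)"
      using vv_in_CS_imp_eq_piS[OF S E] r ray_subset_CS_iff by auto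
    moreover have "a + b \<in> {1..n}" using E unfolding Estar_def by auto
    ultimately show "r \<in> (\<lambda>l. ray (vv n (piS n S l) (l - piS n S l))) ` {1..n}"
      using r_eq by (intro image_eqI[of _ _ "a + b"]) simp_all
  qed
  show "(\<lambda>l. ray (vv n (piS n S l) (l - piS n S l))) ` {1..n} \<subseteq> {r \<in> extreme_rays n. r \<subseteq> CS n S}"
  proof
    fix r assume "r \<in> (\<lambda>l. ray (vv n (piS n S l) (l - piS n S l))) ` {1..n}"
    then obtain l where l: "l \<in> {1..n}" and r_eq: "r = ray (vv n (piS n S l) (l - piS n S l))"
      by blast
    have sum: "piS n S l + (l - piS n S l) = l" using piS_le(2)[OF S] l by simp
    then have E: "(piS n S l, l - piS n S l) \<in> Estar n" unfolding Estar_def using l by auto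
    have "vv n (piS n S l) (l - piS n S l) \<in> CS n S"
      using vv_in_CS_if_eq_piS[OF S E] sum by simp
    then show "r \<in> {r \<in> extreme_rays n. r \<subseteq> CS n S}"
      using r_eq ray_vv_extreme[OF E] ray_subset_CS_iff by auto
  qed
qed

theorem theorem1p21:
  fixes n :: nat
  shows "bij_betw (\<lambda>(a, b). ray (vv n a b)) (Estar n) (extreme_rays n) \<and>
    (\<forall>S. S \<subseteq> {1..n} \<longrightarrow>
       {r \<in> extreme_rays n. r \<subseteq> CS n S} =
       (\<lambda>l. ray (vv n (piS n S l) (l - piS n S l))) ` {1..n})"
  using bij_betw_ray_vv_extreme_rays extreme_rays_in_CS by blast

end
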